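(* Let $p$ be an odd prime and $G$ a finite $p$-group. Then $G$ is a $2$-closed group if and only if $G$ is cyclic.
   Context: Permutations act on the right. For $X\leq{\rm Sym}(\Omega)$, the $2$-closure of $X$ on $\Omega$ is $X^{(2),\Omega}=\{\theta\in{\rm Sym}(\Omega)\mid \forall \alpha,\beta\in\Omega\ \exists g\in X:\ \alpha^\theta=\alpha^g,\ \beta^\theta=\beta^g\}$. An abstract group $G$ is called a $2$-closed group if $H=H^{(2),\Omega}$ for every set $\Omega$ and every subgroup $H\leq{\rm Sym}(\Omega)$ with $H\cong G$. *)

theory Defs
  imports "HOL-Algebra.Algebra"
begin

definition two_closure :: "'b set \<Rightarrow> ('b \<Rightarrow> 'b) set \<Rightarrow> ('b \<Rightarrow> 'b) set" where
  "two_closure \<Omega> H = {\<theta> \<in> Bij \<Omega>. \<forall>\<alpha>\<in>\<Omega>. \<forall>\<beta>\<in>\<Omega>. \<exists>g\<in>H. \<theta> \<alpha> = g \<alpha> \<and> \<theta> \<beta> = g \<beta>}"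

text \<open>G is 2-closed, where the sets Omega range over all subsets of the type 'b.\<close>

definition two_closed_group :: "'b itself \<Rightarrow> ('a, 'c) monoid_scheme \<Rightarrow> bool" where
  "two_closed_group (_ :: 'b itself) G \<longleftrightarrow>
     (\<forall>(\<Omega> :: 'b set) H. subgroup H (BijGroup \<Omega>) \<and> (BijGroup \<Omega>)\<lparr>carrier := H\<rparr> \<cong> G
        \<longrightarrow> two_closure \<Omega> H = H)"

end

theory Submission
  imports Defs
begin

text \<open>A cyclic \<open>p\<close>-group acting faithfully has a point with trivial stabiliser: its unique
  subgroup of order \<open>p\<close> moves some point and lies in every nontrivial subgroup.  A permutation
  group with such a point is 2-closed, because an element of the 2-closure agrees with a single
  group element on every pair containing that point.

  Conversely, a non-cyclic \<open>p\<close>-group with \<open>p\<close> odd contains elements \<open>w\<close>, \<open>x\<close> of order \<open>p\<close>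
  with \<open>\<langle>w\<rangle>\<close> normal, \<open>x w = w x\<close>, \<open>x \<notin> \<langle>w\<rangle>\<close> and all conjugates of \<open>x\<close> in
  \<open>\<langle>w\<rangle> x\<close>.  They come from a normal cyclic subgroup \<open>\<langle>m\<rangle>\<close> of maximal order and a lift
  \<open>g\<close> of a central element of order \<open>p\<close> of \<open>G/\<langle>m\<rangle>\<close>; oddness of \<open>p\<close> makes the coset
  \<open>\<langle>m\<rangle> g\<close> contain an element of order \<open>p\<close>.  Now \<open>G\<close> acts faithfully on the disjoint union of
  the left cosets of \<open>\<langle>w\<rangle>\<close>, \<open>\<langle>x\<rangle>\<close> and \<open>\<langle>x w\<rangle>\<close>, and the permutation acting as \<open>x\<close> on
  the first orbit and trivially on the other two lies in the 2-closure but not in the image of \<open>G\<close>.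
  Relabelling this finite set inside the infinite type \<open>'b\<close> contradicts 2-closedness.\<close>

text \<open>The ASCII multiset notation \<open><#\<close> would clash with left cosets.\<close>
no_notation (ASCII) subset_mset (infix \<open><#\<close> 50)

section \<open>Arithmetic modulo a prime\<close>

lemma fermat_little_nat:
  assumes p: "Factorial_Ring.prime (p::nat)"
  shows "a ^ p mod p = a mod p"
proof (induction a)
  case (Suc a)
  have p0: "p > 0" using p prime_gt_0_nat by blast
  have "(a + 1) ^ p = (\<Sum>k\<le>p. (p choose k) * a ^ k)" using binomial[of a 1 p] by simp
  also have "\<dots> = (\<Sum>k\<in>insert 0 (insert p {1..<p}). (p choose k) * a ^ k)"
    by (rule sum.cong) (use p0 in auto)
  also have "\<dots> = 1 + a ^ p + (\<Sum>k\<in>{1..<p}. (p choose k) * a ^ k)"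
    using p0 by (simp add: sum.insert_if)
  finally have binom: "(a + 1) ^ p = 1 + a ^ p + (\<Sum>k\<in>{1..<p}. (p choose k) * a ^ k)" .
  have "p dvd (\<Sum>k\<in>{1..<p}. (p choose k) * a ^ k)"
    by (rule dvd_sum) (use p p0 dvd_choose_prime in auto)
  then obtain c where "(a + 1) ^ p = (1 + a ^ p) + p * c" unfolding binom by auto
  then have "(a + 1) ^ p mod p = (1 + a ^ p) mod p" by simp
  also have "\<dots> = (1 + a) mod p" using Suc by (metis mod_add_right_eq)
  finally show ?case by simp
qed (simp add: zero_power prime_gt_0_nat[OF p])

text \<open>For \<open>r = 1 + p t\<close> one has \<open>\<Sum>i<p. r ^ i \<equiv> p + p t (p - 1) p / 2 (mod p\<^sup>2)\<close>, and
  \<open>(p - 1) / 2\<close> is an integer because \<open>p\<close> is odd.\<close>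

lemma geometric_sum_mod_prime:
  assumes p: "Factorial_Ring.prime (p::nat)" and "odd p" and r: "r mod p = 1"
  shows "\<exists>u. (\<Sum>i<p. r ^ i) = p * u \<and> coprime u p"
proof -
  define t where "t = r div p"
  have rt: "r = 1 + p * t"
    using r unfolding t_def by (metis add.commute div_mult_mod_eq mult.commute)
  have power: "\<exists>C. r ^ i = 1 + i * p * t + p\<^sup>2 * C" for i
  proof (induction i)
    case (Suc i)
    then obtain C where "r ^ i = 1 + i * p * t + p\<^sup>2 * C" by blast
    then have "r ^ Suc i = 1 + Suc i * p * t + p\<^sup>2 * (i * t * t + C + C * p * t)"
      using rt by (simp add: algebra_simps power2_eq_square)
    then show ?case by blast
  qed simp
  have sum: "\<exists>C. (\<Sum>i<n. r ^ i) = n + p * t * (\<Sum>i<n. i) + p\<^sup>2 * C" for n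
  proof (induction n)
    case (Suc n)
    then obtain C where C: "(\<Sum>i<n. r ^ i) = n + p * t * (\<Sum>i<n. i) + p\<^sup>2 * C" by blast
    obtain D where D: "r ^ n = 1 + n * p * t + p\<^sup>2 * D" using power by blast
    have "(\<Sum>i<Suc n. r ^ i) = Suc n + p * t * (\<Sum>i<Suc n. i) + p\<^sup>2 * (C + D)"
      using C D by (simp add: algebra_simps)
    then show ?case by blast
  qed simp
  obtain q where q: "p = Suc (2 * q)" using \<open>odd p\<close> by (metis oddE Suc_eq_plus1)
  have "(\<Sum>i<p. i) = p * q"
    unfolding q lessThan_Suc_atMost atLeast0AtMost[symmetric] gauss_sum_nat by simp
  moreover obtain C where "(\<Sum>i<p. r ^ i) = p + p * t * (\<Sum>i<p. i) + p\<^sup>2 * C" using sum by blast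
  ultimately have "(\<Sum>i<p. r ^ i) = p * (1 + p * (t * q + C))"
    by (simp add: algebra_simps power2_eq_square)
  moreover have "coprime (1 + p * (t * q + C)) p"
  proof -
    have "(1 + p * (t * q + C)) mod p = 1"
      using prime_gt_1_nat[OF p] mod_mult_self2[of 1 p "t * q + C"] by simp
    then show ?thesis
      using coprime_mod_left_iff[of p "1 + p * (t * q + C)"] p by (metis coprime_1_left not_prime_0)
  qed
  ultimately show ?thesis by blast
qed

section \<open>Permutation groups and their 2-closure\<close>

lemma carrier_BijGroup: "carrier (BijGroup S) = Bij S"
  by (simp add: BijGroup_def)

lemma one_BijGroup: "\<one>\<^bsub>BijGroup S\<^esub> = (\<lambda>x\<in>S. x)"
  by (simp add: BijGroup_def)

lemma BijGroup_mult_apply: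
  "f \<in> Bij S \<Longrightarrow> g \<in> Bij S \<Longrightarrow> x \<in> S \<Longrightarrow> (f \<otimes>\<^bsub>BijGroup S\<^esub> g) x = f (g x)"
  by (simp add: BijGroup_def compose_def)

lemma Bij_eqI: "f \<in> Bij S \<Longrightarrow> g \<in> Bij S \<Longrightarrow> (\<And>x. x \<in> S \<Longrightarrow> f x = g x) \<Longrightarrow> f = g"
  by (meson Bij_imp_extensional extensionalityI)

lemma BijGroup_nat_pow_fixes:
  assumes "f \<in> Bij S" and "x \<in> S" and "f x = x"
  shows "(f [^]\<^bsub>BijGroup S\<^esub> (k::nat)) x = x"
proof (induction k)
  case 0
  show ?case using assms(2) by (simp add: one_BijGroup)
next
  case (Suc k)
  interpret B: group "BijGroup S" by (rule group_BijGroup)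
  have "f [^]\<^bsub>BijGroup S\<^esub> k \<in> Bij S"
    using B.nat_pow_closed[of f k] assms(1) by (simp only: carrier_BijGroup)
  then show ?case using Suc assms by (simp only: B.nat_pow_Suc BijGroup_mult_apply)
qed

lemma subgroup_subset_two_closure:
  "subgroup H (BijGroup S) \<Longrightarrow> H \<subseteq> two_closure S H"
  unfolding two_closure_def using subgroup.subset carrier_BijGroup by fastforce

lemma two_closure_eq_if_free_point:
  assumes H: "subgroup H (BijGroup S)" and a: "a \<in> S"
    and free: "\<And>h. h \<in> H \<Longrightarrow> h a = a \<Longrightarrow> h = (\<lambda>x\<in>S. x)"
  shows "two_closure S H = H"
proof
  interpret B: group "BijGroup S" by (rule group_BijGroup)
  have HB: "H \<subseteq> Bij S" using subgroup.subset[OF H] carrier_BijGroup by metis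
  have eq_if_agree: "g' = g" if g: "g \<in> H" "g' \<in> H" "g a = g' a" for g g'
  proof -
    define u where "u = inv\<^bsub>BijGroup S\<^esub> g \<otimes>\<^bsub>BijGroup S\<^esub> g'"
    have gB: "g \<in> Bij S" "g' \<in> Bij S" "inv\<^bsub>BijGroup S\<^esub> g \<in> Bij S"
      using g HB B.inv_closed[of g] carrier_BijGroup[of S] by auto
    have "u \<in> H" unfolding u_def using H g by (simp add: subgroup.m_closed subgroup.m_inv_closed)
    moreover have "u a = (inv\<^bsub>BijGroup S\<^esub> g \<otimes>\<^bsub>BijGroup S\<^esub> g) a"
      unfolding u_def using gB a g(3) by (simp only: BijGroup_mult_apply)
    moreover have "(inv\<^bsub>BijGroup S\<^esub> g \<otimes>\<^bsub>BijGroup S\<^esub> g) = \<one>\<^bsub>BijGroup S\<^esub>"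
      using gB(1) carrier_BijGroup[of S] by simp
    ultimately have "u = \<one>\<^bsub>BijGroup S\<^esub>" using free a by (simp add: one_BijGroup)
    then have "g' = g \<otimes>\<^bsub>BijGroup S\<^esub> \<one>\<^bsub>BijGroup S\<^esub>"
      using gB carrier_BijGroup[of S] B.inv_solve_left[of "\<one>\<^bsub>BijGroup S\<^esub>" g g']
      unfolding u_def by (metis B.one_closed)
    then show ?thesis using gB carrier_BijGroup[of S] by simp
  qed
  show "two_closure S H \<subseteq> H"
  proof
    fix t assume "t \<in> two_closure S H"
    then have t: "t \<in> Bij S" "\<And>y. y \<in> S \<Longrightarrow> \<exists>g\<in>H. t a = g a \<and> t y = g y"
      using a unfolding two_closure_def by auto
    obtain g where g: "g \<in> H" "t a = g a" using t(2) a by blast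
    have "t y = g y" if "y \<in> S" for y
      using t(2)[OF that] g eq_if_agree by fastforce
    then have "t = g" using Bij_eqI t(1) g(1) HB by blast
    then show "t \<in> H" using g(1) by simp
  qed
qed (rule subgroup_subset_two_closure[OF H])

lemma two_closure_empty:
  assumes "subgroup H (BijGroup {})"
  shows "two_closure {} H = H"
proof
  have "(\<lambda>x\<in>{}. x) \<in> H" using subgroup.one_closed[OF assms] by (simp add: one_BijGroup)
  then show "two_closure {} H \<subseteq> H"
    using Bij_eqI[of _ "{}" "\<lambda>x\<in>{}. x"] id_Bij by (auto simp: two_closure_def)
qed (rule subgroup_subset_two_closure[OF assms])

definition relabel :: "('x \<Rightarrow> 'y) \<Rightarrow> 'x set \<Rightarrow> ('x \<Rightarrow> 'x) \<Rightarrow> 'y \<Rightarrow> 'y" where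
  "relabel \<sigma> A f = (\<lambda>b\<in>\<sigma> ` A. \<sigma> (f (inv_into A \<sigma> b)))"

lemma relabel_apply: "inj_on \<sigma> A \<Longrightarrow> x \<in> A \<Longrightarrow> relabel \<sigma> A f (\<sigma> x) = \<sigma> (f x)"
  by (simp add: relabel_def)

lemma relabel_Bij:
  assumes \<sigma>: "bij_betw \<sigma> A B" and f: "f \<in> Bij A"
  shows "relabel \<sigma> A f \<in> Bij B"
proof -
  have "bij_betw f A A" using f by (simp add: Bij_def)
  then have "bij_betw (\<sigma> \<circ> f \<circ> inv_into A \<sigma>) B B"
    using bij_betw_trans[OF bij_betw_inv_into[OF \<sigma>] bij_betw_trans[OF _ \<sigma>]] by blast
  moreover have "relabel \<sigma> A f = restrict (\<sigma> \<circ> f \<circ> inv_into A \<sigma>) B"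
    unfolding relabel_def bij_betw_imp_surj_on[OF \<sigma>] by (simp add: comp_def)
  ultimately show ?thesis unfolding Bij_def by simp
qed

lemma relabel_inj_on:
  assumes \<sigma>: "bij_betw \<sigma> A B"
  shows "inj_on (relabel \<sigma> A) (Bij A)"
proof (rule inj_onI)
  fix f g assume f: "f \<in> Bij A" and g: "g \<in> Bij A" and eq: "relabel \<sigma> A f = relabel \<sigma> A g"
  have inj: "inj_on \<sigma> A" using \<sigma> by (rule bij_betw_imp_inj_on)
  have "f x = g x" if x: "x \<in> A" for x
  proof -
    have "\<sigma> (f x) = \<sigma> (g x)"
      using fun_cong[OF eq, of "\<sigma> x"] relabel_apply[OF inj x] by simp
    moreover have "f x \<in> A" "g x \<in> A" using f g x Bij_imp_funcset by blast+
    ultimately show ?thesis using inj by (simp add: inj_on_eq_iff)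
  qed
  then show "f = g" using Bij_eqI f g by blast
qed

lemma relabel_surj:
  assumes \<sigma>: "bij_betw \<sigma> A B" and t: "t \<in> Bij B"
  shows "\<exists>f\<in>Bij A. relabel \<sigma> A f = t"
proof
  define j where "j = inv_into A \<sigma>"
  have j: "bij_betw j B A" unfolding j_def using \<sigma> by (rule bij_betw_inv_into)
  have "bij_betw t B B" using t by (simp add: Bij_def)
  then have jt\<sigma>: "bij_betw (j \<circ> t \<circ> \<sigma>) A A"
    using bij_betw_trans[OF \<sigma> bij_betw_trans[OF _ j]] by blast
  show f: "restrict (j \<circ> t \<circ> \<sigma>) A \<in> Bij A"
    using jt\<sigma> unfolding Bij_def by simp
  show "relabel \<sigma> A (restrict (j \<circ> t \<circ> \<sigma>) A) = t"
  proof (rule Bij_eqI)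
    show "relabel \<sigma> A (restrict (j \<circ> t \<circ> \<sigma>) A) \<in> Bij B"
      using relabel_Bij[OF \<sigma> f] .
    show "t \<in> Bij B" by fact
    fix b assume b: "b \<in> B"
    have tb: "t b \<in> B" using t b Bij_imp_funcset by blast
    have jb: "j b \<in> A" "\<sigma> (j b) = b"
      using bij_betw_apply[OF j b] bij_betw_inv_into_right[OF \<sigma> b] unfolding j_def by auto
    have "relabel \<sigma> A (restrict (j \<circ> t \<circ> \<sigma>) A) b = \<sigma> (restrict (j \<circ> t \<circ> \<sigma>) A (j b))"
      using relabel_apply[OF bij_betw_imp_inj_on[OF \<sigma>] jb(1)] unfolding jb(2) .
    also have "\<dots> = \<sigma> (j (t b))" using jb by simp
    also have "\<dots> = t b" using bij_betw_inv_into_right[OF \<sigma> tb] unfolding j_def .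
    finally show "relabel \<sigma> A (restrict (j \<circ> t \<circ> \<sigma>) A) b = t b" .
  qed
qed

lemma relabel_mult:
  assumes \<sigma>: "bij_betw \<sigma> A B" and f: "f \<in> Bij A" and g: "g \<in> Bij A"
  shows "relabel \<sigma> A (f \<otimes>\<^bsub>BijGroup A\<^esub> g) = relabel \<sigma> A f \<otimes>\<^bsub>BijGroup B\<^esub> relabel \<sigma> A g"
proof (rule Bij_eqI)
  have inj: "inj_on \<sigma> A" using \<sigma> by (rule bij_betw_imp_inj_on)
  have fg: "f \<otimes>\<^bsub>BijGroup A\<^esub> g \<in> Bij A"
    using f g by (simp add: BijGroup_def compose_Bij)
  show "relabel \<sigma> A (f \<otimes>\<^bsub>BijGroup A\<^esub> g) \<in> Bij B" using relabel_Bij[OF \<sigma> fg] .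
  show "relabel \<sigma> A f \<otimes>\<^bsub>BijGroup B\<^esub> relabel \<sigma> A g \<in> Bij B"
    using relabel_Bij[OF \<sigma>] f g by (simp add: BijGroup_def compose_Bij)
  fix b assume "b \<in> B"
  then obtain x where x: "x \<in> A" "b = \<sigma> x" using bij_betw_imp_surj_on[OF \<sigma>] by blast
  have gx: "g x \<in> A" using g x(1) Bij_imp_funcset by blast
  have "relabel \<sigma> A (f \<otimes>\<^bsub>BijGroup A\<^esub> g) (\<sigma> x) = \<sigma> (f (g x))"
    using relabel_apply[OF inj x(1)] f g x(1) by (simp add: BijGroup_mult_apply)
  also have "\<dots> = relabel \<sigma> A f (relabel \<sigma> A g (\<sigma> x))"
    using relabel_apply[OF inj] x(1) gx by simp
  also have "\<dots> = (relabel \<sigma> A f \<otimes>\<^bsub>BijGroup B\<^esub> relabel \<sigma> A g) (\<sigma> x)"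
    using relabel_Bij[OF \<sigma>] f g x(1) bij_betw_apply[OF \<sigma>] by (simp add: BijGroup_mult_apply)
  finally show "relabel \<sigma> A (f \<otimes>\<^bsub>BijGroup A\<^esub> g) b = (relabel \<sigma> A f \<otimes>\<^bsub>BijGroup B\<^esub> relabel \<sigma> A g) b"
    using x(2) by simp
qed

lemma two_closure_relabel:
  assumes \<sigma>: "bij_betw \<sigma> A B" and H: "H \<subseteq> Bij A"
  shows "two_closure B (relabel \<sigma> A ` H) = relabel \<sigma> A ` two_closure A H"
proof
  have inj: "inj_on \<sigma> A" and B: "\<sigma> ` A = B" using \<sigma> by (auto simp: bij_betw_def)
  show "relabel \<sigma> A ` two_closure A H \<subseteq> two_closure B (relabel \<sigma> A ` H)"
  proof (clarsimp simp: two_closure_def relabel_Bij[OF \<sigma>])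
    fix t a b assume t: "t \<in> Bij A" "\<forall>\<alpha>\<in>A. \<forall>\<beta>\<in>A. \<exists>g\<in>H. t \<alpha> = g \<alpha> \<and> t \<beta> = g \<beta>"
      and ab: "a \<in> B" "b \<in> B"
    then obtain x y where xy: "x \<in> A" "y \<in> A" "a = \<sigma> x" "b = \<sigma> y" using B by blast
    then obtain g where "g \<in> H" "t x = g x" "t y = g y" using t(2) by blast
    then show "\<exists>g\<in>H. relabel \<sigma> A t a = relabel \<sigma> A g a \<and> relabel \<sigma> A t b = relabel \<sigma> A g b"
      using xy relabel_apply[OF inj] by auto
  qed
  show "two_closure B (relabel \<sigma> A ` H) \<subseteq> relabel \<sigma> A ` two_closure A H"
  proof
    fix t assume t: "t \<in> two_closure B (relabel \<sigma> A ` H)"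
    then obtain f where f: "f \<in> Bij A" "relabel \<sigma> A f = t"
      using relabel_surj[OF \<sigma>] unfolding two_closure_def by blast
    have "\<exists>g\<in>H. f x = g x \<and> f y = g y" if "x \<in> A" "y \<in> A" for x y
    proof -
      have "\<sigma> x \<in> B" "\<sigma> y \<in> B" using that B by blast+
      then obtain g' where "g' \<in> relabel \<sigma> A ` H" "t (\<sigma> x) = g' (\<sigma> x)" "t (\<sigma> y) = g' (\<sigma> y)"
        using t unfolding two_closure_def by blast
      then obtain g where g: "g \<in> H" "t (\<sigma> x) = relabel \<sigma> A g (\<sigma> x)" "t (\<sigma> y) = relabel \<sigma> A g (\<sigma> y)"
        by blast
      have agree: "f z = g z" if z: "z \<in> A" "t (\<sigma> z) = relabel \<sigma> A g (\<sigma> z)" for z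
      proof -
        have "\<sigma> (f z) = \<sigma> (g z)"
          using z(2) relabel_apply[OF inj z(1), of f] relabel_apply[OF inj z(1), of g]
          unfolding f(2) by simp
        moreover have "f z \<in> A" "g z \<in> A" using f(1) g(1) H z(1) Bij_imp_funcset by blast+
        ultimately show ?thesis using inj by (simp add: inj_on_eq_iff)
      qed
      then show ?thesis using g that by blast
    qed
    then show "t \<in> relabel \<sigma> A ` two_closure A H" using f unfolding two_closure_def by blast
  qed
qed

lemma not_two_closed_if_faithful_action:
  fixes G :: "('a, 'c) monoid_scheme" and A :: "'x set"
  assumes G: "group G" and inf: "infinite (UNIV :: 'b set)" and A: "finite A"
    and \<phi>: "\<phi> \<in> hom G (BijGroup A)" "inj_on \<phi> (carrier G)"
    and not_closed: "two_closure A (\<phi> ` carrier G) \<noteq> \<phi> ` carrier G"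
  shows "\<not> two_closed_group TYPE('b) G"
proof -
  obtain B :: "'b set" where "finite B" "card B = card A"
    using infinite_arbitrarily_large[OF inf] by blast
  then obtain \<sigma> where \<sigma>: "bij_betw \<sigma> A B" using finite_same_card_bij[OF A] by metis
  define H where "H = (relabel \<sigma> A \<circ> \<phi>) ` carrier G"
  have \<phi>B: "\<phi> x \<in> Bij A" if "x \<in> carrier G" for x
    using \<phi>(1) that by (auto simp: hom_def carrier_BijGroup)
  have \<psi>: "relabel \<sigma> A \<circ> \<phi> \<in> hom G (BijGroup B)"
  proof (rule homI)
    show "(relabel \<sigma> A \<circ> \<phi>) x \<in> carrier (BijGroup B)" if "x \<in> carrier G" for x
      using relabel_Bij[OF \<sigma> \<phi>B[OF that]] by (simp add: carrier_BijGroup)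
    show "(relabel \<sigma> A \<circ> \<phi>) (x \<otimes>\<^bsub>G\<^esub> y) = (relabel \<sigma> A \<circ> \<phi>) x \<otimes>\<^bsub>BijGroup B\<^esub> (relabel \<sigma> A \<circ> \<phi>) y"
      if "x \<in> carrier G" "y \<in> carrier G" for x y
      using that \<phi>(1) relabel_mult[OF \<sigma> \<phi>B \<phi>B] by (simp add: hom_mult)
  qed
  have "inj_on (relabel \<sigma> A \<circ> \<phi>) (carrier G)"
    using \<phi>(2) relabel_inj_on[OF \<sigma>] \<phi>B by (metis comp_inj_on image_subsetI inj_on_subset)
  then have "relabel \<sigma> A \<circ> \<phi> \<in> iso G (BijGroup B\<lparr>carrier := H\<rparr>)"
    using \<psi> unfolding H_def by (auto simp: iso_def hom_def bij_betw_def)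
  then have iso: "BijGroup B\<lparr>carrier := H\<rparr> \<cong> G" using G by (simp add: is_isoI group.iso_sym)
  have sub: "subgroup H (BijGroup B)"
    unfolding H_def using group_hom.img_is_subgroup[of G "BijGroup B"] \<psi> G group_BijGroup
    unfolding group_hom_def group_hom_axioms_def by blast
  have \<phi>XB: "\<phi> ` carrier G \<subseteq> Bij A" using \<phi>B by blast
  have "two_closure A (\<phi> ` carrier G) \<subseteq> Bij A" by (auto simp: two_closure_def)
  then have "two_closure B H \<noteq> H"
    unfolding H_def image_comp[symmetric] two_closure_relabel[OF \<sigma> \<phi>XB]
    using inj_on_image_eq_iff[OF relabel_inj_on[OF \<sigma>]] \<phi>XB not_closed by blast
  then show ?thesis unfolding two_closed_group_def using sub iso by blast
qed

section \<open>Powers and conjugation\<close>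

definition powers :: "('a, 'c) monoid_scheme \<Rightarrow> 'a \<Rightarrow> 'a set" where
  "powers G y = {y [^]\<^bsub>G\<^esub> (k::nat) | k. True}"

context group
begin

lemma inv_mult_cancel_left [simp]: "x \<in> carrier G \<Longrightarrow> y \<in> carrier G \<Longrightarrow> inv x \<otimes> (x \<otimes> y) = y"
  by (simp add: m_assoc[symmetric])

lemma mult_inv_cancel_left [simp]: "x \<in> carrier G \<Longrightarrow> y \<in> carrier G \<Longrightarrow> x \<otimes> (inv x \<otimes> y) = y"
  by (simp add: m_assoc[symmetric])

lemma nat_pow_in_powers [simp]: "y [^] (k::nat) \<in> powers G y"
  unfolding powers_def by blast

lemma powers_subset_carrier: "y \<in> carrier G \<Longrightarrow> powers G y \<subseteq> carrier G"
  unfolding powers_def by auto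

lemma nat_pow_closed_powers: "y \<in> carrier G \<Longrightarrow> z \<in> powers G y \<Longrightarrow> z [^] (k::nat) \<in> powers G y"
  unfolding powers_def by (auto simp: nat_pow_pow)

lemma generate_singleton_eq_powers:
  "finite (carrier G) \<Longrightarrow> y \<in> carrier G \<Longrightarrow> generate G {y} = powers G y"
  using generate_pow_on_finite_carrier by (simp add: powers_def)

lemma subgroup_powers: "finite (carrier G) \<Longrightarrow> y \<in> carrier G \<Longrightarrow> subgroup (powers G y) G"
  using generate_is_subgroup[of "{y}"] generate_singleton_eq_powers by simp

lemma card_powers: "finite (carrier G) \<Longrightarrow> y \<in> carrier G \<Longrightarrow> card (powers G y) = ord y"
  using generate_pow_card generate_singleton_eq_powers by simp

lemma conj_nat_pow:
  assumes "d \<in> carrier G" and "y \<in> carrier G"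
  shows "d \<otimes> y [^] (k::nat) \<otimes> inv d = (d \<otimes> y \<otimes> inv d) [^] k"
proof (induction k)
  case (Suc k)
  have "d \<otimes> y [^] Suc k \<otimes> inv d = (d \<otimes> y [^] k \<otimes> inv d) \<otimes> (d \<otimes> y \<otimes> inv d)"
    using assms by (simp add: nat_pow_Suc2 m_assoc)
  then show ?case using Suc by simp
qed (simp add: assms)

lemma powers_nat_pow_coprime:
  assumes y: "y \<in> carrier G" and "y [^] (N::nat) = \<one>" and "coprime k N"
  shows "y \<in> powers G (y [^] k)"
proof (cases "k = 0")
  case True
  then have "y = \<one>" using assms by simp
  then show ?thesis using nat_pow_in_powers[of "y [^] k" 0] by simp
next
  case False
  obtain a b where ab: "k * a = N * b + 1"
    using bezout_nat[OF False, of N] \<open>coprime k N\<close> by (auto simp: coprime_iff_gcd_eq_1)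
  have "(y [^] k) [^] a = (y [^] N) [^] b \<otimes> y"
    using y ab by (simp add: nat_pow_pow nat_pow_mult[symmetric])
  then have "(y [^] k) [^] a = y" using assms by simp
  then show ?thesis by (metis nat_pow_in_powers)
qed

lemma conj_nat_pow_iter:
  assumes h: "h \<in> carrier G" and m: "m \<in> carrier G" and r: "h \<otimes> m \<otimes> inv h = m [^] (r::nat)"
  shows "h [^] (i::nat) \<otimes> m [^] (j::nat) \<otimes> inv (h [^] i) = m [^] (r ^ i * j)"
proof (induction i arbitrary: j)
  case (Suc i)
  have "h [^] Suc i \<otimes> m [^] j \<otimes> inv (h [^] Suc i) = h [^] i \<otimes> (h \<otimes> m [^] j \<otimes> inv h) \<otimes> inv (h [^] i)"
    using h m by (simp add: nat_pow_Suc2 m_assoc inv_mult_group)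
  also have "h \<otimes> m [^] j \<otimes> inv h = m [^] (r * j)"
    using conj_nat_pow[OF h m] r m by (simp add: nat_pow_pow)
  finally show ?case using Suc by (simp add: mult.assoc mult.left_commute)
qed (simp add: m)

lemma nat_pow_mult_conj:
  assumes h: "h \<in> carrier G" and m: "m \<in> carrier G" and r: "h \<otimes> m \<otimes> inv h = m [^] (r::nat)"
  shows "(m [^] (j::nat) \<otimes> h) [^] (n::nat) = m [^] (j * (\<Sum>i<n. r ^ i)) \<otimes> h [^] n"
proof (induction n)
  case (Suc n)
  have swap: "h [^] n \<otimes> m [^] j = m [^] (r ^ n * j) \<otimes> h [^] n"
    using conj_nat_pow_iter[OF h m r, of n j] h m by (metis inv_solve_right m_closed nat_pow_closed)
  have "(m [^] j \<otimes> h) [^] Suc n = m [^] (j * (\<Sum>i<n. r ^ i)) \<otimes> (h [^] n \<otimes> m [^] j) \<otimes> h"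
    using Suc h m by (simp add: m_assoc)
  also have "\<dots> = m [^] (j * (\<Sum>i<n. r ^ i)) \<otimes> m [^] (r ^ n * j) \<otimes> (h [^] n \<otimes> h)"
    using h m by (simp add: swap m_assoc)
  also have "\<dots> = m [^] (j * (\<Sum>i<Suc n. r ^ i)) \<otimes> h [^] Suc n"
    using h m by (simp add: nat_pow_mult algebra_simps)
  finally show ?case .
qed (simp add: m h)

end

section \<open>Cyclic \<open>p\<close>-groups are 2-closed\<close>

lemma (in group) cyclic_pgroup_ex_common_power:
  assumes cyc: "cyclic_group G" and p: "Factorial_Ring.prime p" and ord: "order G = p ^ Suc n"
  shows "\<exists>z\<in>carrier G. z \<noteq> \<one> \<and> (\<forall>h\<in>carrier G. h \<noteq> \<one> \<longrightarrow> (\<exists>k::nat. h [^] k = z))"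
proof -
  obtain a where a: "a \<in> carrier G" "subgroup_generated G {a} = G"
    using cyc unfolding cyclic_group_def by blast
  define N where "N = p ^ Suc n"
  have ord_a: "ord a = N" using cyclic_order_is_ord[OF a(1)] a(2) ord N_def by simp
  have fin: "finite (carrier G)" using ord p order_gt_0_iff_finite by (simp add: prime_gt_0_nat)
  have "carrier G = generate G (carrier G \<inter> {a})"
    by (metis a(2) carrier_subgroup_generated)
  then have powers_a: "carrier G = {a [^] k | k::nat. True}"
    using generate_pow_on_finite_carrier[OF fin a(1)] a(1) by simp
  define z where "z = a [^] (p ^ n)" \<comment> \<open>generates the unique subgroup of order \<open>p\<close>\<close>
  have z_ne: "z \<noteq> \<one>"
  proof
    assume "z = \<one>"
    then have "p ^ Suc n dvd p ^ n" using pow_eq_id[OF a(1)] ord_a N_def z_def by simp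
    then show False using p by (simp add: prime_gt_1_nat)
  qed
  have "\<exists>l::nat. h [^] l = z" if h: "h \<in> carrier G" "h \<noteq> \<one>" for h
  proof -
    obtain k :: nat where hk: "h = a [^] k" using h(1) powers_a by blast
    have "\<not> N dvd k" using h(2) hk pow_eq_id[OF a(1)] ord_a by simp
    then have k0: "k \<noteq> 0" by (metis dvd_0_right)
    obtain j where j: "j \<le> Suc n" "gcd k N = p ^ j"
      using divides_primepow_nat[OF p] N_def by (metis gcd_dvd2)
    have "j \<noteq> Suc n" using j(2) \<open>\<not> N dvd k\<close> N_def by (metis gcd_dvd1)
    then have "gcd k N dvd p ^ n" using j by (simp add: le_imp_power_dvd)
    then obtain c where c: "p ^ n = gcd k N * c" by (rule dvdE)
    obtain x y where xy: "k * x = N * y + gcd k N" using bezout_nat[OF k0] by blast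
    have "k * x * c = N * (y * c) + p ^ n" using xy c by (simp add: algebra_simps)
    then have "h [^] (x * c) = a [^] (N * (y * c)) \<otimes> a [^] (p ^ n)"
      using hk a(1) by (simp add: nat_pow_pow nat_pow_mult mult.assoc)
    also have "a [^] (N * (y * c)) = \<one>" using pow_eq_id[OF a(1)] ord_a by simp
    finally have "h [^] (x * c) = a [^] (p ^ n)" using a(1) by simp
    then show ?thesis unfolding z_def by blast
  qed
  then show ?thesis using z_ne a(1) z_def by blast
qed

lemma cyclic_pgroup_free_point:
  assumes H: "subgroup H (BijGroup S)" and cyc: "cyclic_group (BijGroup S\<lparr>carrier := H\<rparr>)"
    and p: "Factorial_Ring.prime p" and card: "card H = p ^ n" and S: "S \<noteq> {}"
  shows "\<exists>a\<in>S. \<forall>h\<in>H. h a = a \<longrightarrow> h = (\<lambda>x\<in>S. x)"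
proof (cases n)
  case 0
  then obtain h0 where "H = {h0}" using card card_1_singletonE by auto
  then show ?thesis using S subgroup.one_closed[OF H] by (auto simp: one_BijGroup)
next
  case (Suc m)
  interpret B: group "BijGroup S" by (rule group_BijGroup)
  interpret K: group "BijGroup S\<lparr>carrier := H\<rparr>" by (rule B.subgroup_imp_group[OF H])
  have HB: "H \<subseteq> Bij S" using subgroup.subset[OF H] carrier_BijGroup by metis
  have ord_K: "order (BijGroup S\<lparr>carrier := H\<rparr>) = p ^ Suc m" using card Suc by (simp add: order_def)
  obtain z where z: "z \<in> H" "z \<noteq> (\<lambda>x\<in>S. x)"
    and z_power: "\<forall>h\<in>H. h \<noteq> (\<lambda>x\<in>S. x) \<longrightarrow> (\<exists>k::nat. h [^]\<^bsub>BijGroup S\<lparr>carrier := H\<rparr>\<^esub> k = z)"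
    using K.cyclic_pgroup_ex_common_power[OF cyc p ord_K] by (auto simp: one_BijGroup)
  have "\<exists>a\<in>S. z a \<noteq> a"
  proof (rule ccontr)
    assume "\<not> ?thesis"
    then have "z = (\<lambda>x\<in>S. x)" using Bij_eqI[of z S "\<lambda>x\<in>S. x"] z(1) HB id_Bij by auto
    then show False using z(2) by contradiction
  qed
  then obtain a where a: "a \<in> S" "z a \<noteq> a" by blast
  have "h = (\<lambda>x\<in>S. x)" if h: "h \<in> H" "h a = a" for h
  proof (rule ccontr)
    assume "h \<noteq> (\<lambda>x\<in>S. x)"
    then obtain k :: nat where "h [^]\<^bsub>BijGroup S\<lparr>carrier := H\<rparr>\<^esub> k = z" using z_power h(1) by blast
    then have "(h [^]\<^bsub>BijGroup S\<^esub> k) a = z a" by (simp only: B.nat_pow_consistent[of h k H])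
    then show False using BijGroup_nat_pow_fixes[of h S a k] h HB a by auto
  qed
  then show ?thesis using a(1) by blast
qed

lemma cyclic_pgroup_two_closed:
  assumes p: "Factorial_Ring.prime p" and G: "group G" and ord: "order G = p ^ n"
    and cyc: "cyclic_group G"
  shows "two_closed_group TYPE('b) G"
  unfolding two_closed_group_def
proof (intro allI impI)
  fix S :: "'b set" and H
  assume "subgroup H (BijGroup S) \<and> BijGroup S\<lparr>carrier := H\<rparr> \<cong> G"
  then have H: "subgroup H (BijGroup S)" and iso: "BijGroup S\<lparr>carrier := H\<rparr> \<cong> G" by blast+
  have K: "group (BijGroup S\<lparr>carrier := H\<rparr>)"
    using group.subgroup_imp_group[OF group_BijGroup H] .
  show "two_closure S H = H"
  proof (cases "S = {}")
    case True
    then show ?thesis using two_closure_empty H by blast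
  next
    case False
    have "cyclic_group (BijGroup S\<lparr>carrier := H\<rparr>)"
      using isomorphic_group_cyclicity[OF iso K G] cyc by blast
    moreover have "card H = p ^ n"
      using iso_same_card[OF iso] ord unfolding order_def by simp
    ultimately obtain a where "a \<in> S" "\<forall>h\<in>H. h a = a \<longrightarrow> h = (\<lambda>x\<in>S. x)"
      using cyclic_pgroup_free_point[OF H _ p _ False] by blast
    then show ?thesis using two_closure_eq_if_free_point[OF H] by blast
  qed
qed

section \<open>Actions on cosets\<close>

lemma (in group) lcos_eq_iff:
  assumes K: "subgroup K G" and c: "c \<in> carrier G" and e: "e \<in> carrier G"
  shows "(c <# K = e <# K) \<longleftrightarrow> inv e \<otimes> c \<in> K"
proof
  assume eq: "c <# K = e <# K"
  have "c \<in> c <# K"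
    using subgroup.lcos_module_rev[OF K is_group c c] subgroup.one_closed[OF K] c by simp
  then have "c \<in> e <# K" using eq by simp
  then obtain k where "k \<in> K" "c = e \<otimes> k" unfolding l_coset_def by blast
  then show "inv e \<otimes> c \<in> K" using e subgroup.mem_carrier[OF K] by simp
next
  assume "inv e \<otimes> c \<in> K"
  then have "c \<in> e <# K" using subgroup.lcos_module_rev[OF K is_group e c] by blast
  then show "c <# K = e <# K" using l_repr_independence[OF _ e K] by simp
qed

definition coset_space ::
    "('a, 'c) monoid_scheme \<Rightarrow> 'i set \<Rightarrow> ('i \<Rightarrow> 'a set) \<Rightarrow> ('i \<times> 'a set) set" where
  "coset_space G I K = (\<lambda>(i, c). (i, c <#\<^bsub>G\<^esub> K i)) ` (I \<times> carrier G)"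

definition coset_action ::
    "('a, 'c) monoid_scheme \<Rightarrow> ('i \<times> 'a set) set \<Rightarrow> 'a \<Rightarrow> 'i \<times> 'a set \<Rightarrow> 'i \<times> 'a set" where
  "coset_action G Q d = (\<lambda>q\<in>Q. (fst q, d <#\<^bsub>G\<^esub> snd q))"

context group
begin

lemma finite_coset_space: "finite I \<Longrightarrow> finite (carrier G) \<Longrightarrow> finite (coset_space G I K)"
  unfolding coset_space_def by simp

lemma mem_coset_space: "q \<in> coset_space G I K \<longleftrightarrow> (\<exists>i\<in>I. \<exists>c\<in>carrier G. q = (i, c <# K i))"
  unfolding coset_space_def by auto

lemma coset_space_memI: "i \<in> I \<Longrightarrow> c \<in> carrier G \<Longrightarrow> (i, c <# K i) \<in> coset_space G I K"
  unfolding coset_space_def by auto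

context
  fixes I :: "'i set" and K :: "'i \<Rightarrow> 'a set"
  assumes subgroups: "\<And>i. i \<in> I \<Longrightarrow> subgroup (K i) G"
begin

lemma coset_action_apply:
  assumes "i \<in> I" "c \<in> carrier G" "d \<in> carrier G"
  shows "coset_action G (coset_space G I K) d (i, c <# K i) = (i, (d \<otimes> c) <# K i)"
proof -
  have "(i, c <# K i) \<in> coset_space G I K" using assms(1,2) by (rule coset_space_memI)
  then have "coset_action G (coset_space G I K) d (i, c <# K i) = (i, d <# (c <# K i))"
    unfolding coset_action_def by simp
  also have "d <# (c <# K i) = (d \<otimes> c) <# K i"
    using lcos_m_assoc[OF subgroup.subset[OF subgroups[OF assms(1)]] assms(3,2)] .
  finally show ?thesis .
qed

lemma coset_action_closed:
  assumes "d \<in> carrier G" "q \<in> coset_space G I K"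
  shows "coset_action G (coset_space G I K) d q \<in> coset_space G I K"
proof -
  obtain i c where ic: "i \<in> I" "c \<in> carrier G" "q = (i, c <# K i)"
    using assms(2) unfolding mem_coset_space by blast
  then show ?thesis
    using coset_action_apply[OF ic(1,2) assms(1)] coset_space_memI[OF ic(1)] assms(1) by simp
qed

lemma coset_action_mult:
  assumes "d \<in> carrier G" "e \<in> carrier G" "q \<in> coset_space G I K"
  shows "coset_action G (coset_space G I K) (d \<otimes> e) q
    = coset_action G (coset_space G I K) d (coset_action G (coset_space G I K) e q)"
proof -
  obtain i c where ic: "i \<in> I" "c \<in> carrier G" "q = (i, c <# K i)"
    using assms(3) unfolding mem_coset_space by blast
  then show ?thesis
    using coset_action_apply[OF ic(1,2)] coset_action_apply[OF ic(1)] assms(1,2)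
    by (simp add: m_assoc)
qed

lemma coset_action_one:
  assumes "q \<in> coset_space G I K"
  shows "coset_action G (coset_space G I K) \<one> q = q"
proof -
  obtain i c where ic: "i \<in> I" "c \<in> carrier G" "q = (i, c <# K i)"
    using assms unfolding mem_coset_space by blast
  then show ?thesis using coset_action_apply[OF ic(1,2) one_closed] by simp
qed

lemma coset_action_Bij:
  assumes d: "d \<in> carrier G"
  shows "coset_action G (coset_space G I K) d \<in> Bij (coset_space G I K)"
proof -
  have "bij_betw (coset_action G (coset_space G I K) d) (coset_space G I K) (coset_space G I K)"
  proof (rule bij_betwI[where g = "coset_action G (coset_space G I K) (inv d)"])
    show "coset_action G (coset_space G I K) d \<in> coset_space G I K \<rightarrow> coset_space G I K"
      "coset_action G (coset_space G I K) (inv d) \<in> coset_space G I K \<rightarrow> coset_space G I K"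
      using d coset_action_closed by auto
    show "coset_action G (coset_space G I K) (inv d) (coset_action G (coset_space G I K) d q) = q"
      "coset_action G (coset_space G I K) d (coset_action G (coset_space G I K) (inv d) q) = q"
      if "q \<in> coset_space G I K" for q
      using coset_action_mult[of "inv d" d q] coset_action_mult[of d "inv d" q]
        coset_action_one[of q] d that
      by simp_all
  qed
  then show ?thesis unfolding Bij_def coset_action_def by simp
qed

lemma coset_action_hom: "coset_action G (coset_space G I K) \<in> hom G (BijGroup (coset_space G I K))"
proof (rule homI)
  show "coset_action G (coset_space G I K) d \<in> carrier (BijGroup (coset_space G I K))"
    if "d \<in> carrier G" for d
    using coset_action_Bij[OF that] by (simp add: carrier_BijGroup)
  fix d e assume de: "d \<in> carrier G" "e \<in> carrier G"
  show "coset_action G (coset_space G I K) (d \<otimes> e)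
    = coset_action G (coset_space G I K) d
      \<otimes>\<^bsub>BijGroup (coset_space G I K)\<^esub> coset_action G (coset_space G I K) e"
  proof (rule Bij_eqI)
    show "coset_action G (coset_space G I K) (d \<otimes> e) \<in> Bij (coset_space G I K)"
      using de coset_action_Bij by simp
    show "coset_action G (coset_space G I K) d \<otimes>\<^bsub>BijGroup (coset_space G I K)\<^esub>
        coset_action G (coset_space G I K) e \<in> Bij (coset_space G I K)"
      using de coset_action_Bij by (simp add: BijGroup_def compose_Bij)
    show "coset_action G (coset_space G I K) (d \<otimes> e) q = (coset_action G (coset_space G I K) d
        \<otimes>\<^bsub>BijGroup (coset_space G I K)\<^esub> coset_action G (coset_space G I K) e) q"
      if "q \<in> coset_space G I K" for q
      using de that coset_action_Bij coset_action_mult by (simp add: BijGroup_mult_apply)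
  qed
qed

text \<open>The stabiliser of the point \<open>(i, K i)\<close> is \<open>K i\<close>, so the kernel is \<open>\<Inter>i\<in>I. K i\<close>.\<close>

lemma inj_on_coset_action:
  assumes core: "(\<Inter>i\<in>I. K i) \<subseteq> {\<one>}"
  shows "inj_on (coset_action G (coset_space G I K)) (carrier G)"
proof (rule inj_onI)
  fix d e assume d: "d \<in> carrier G" and e: "e \<in> carrier G"
    and eq: "coset_action G (coset_space G I K) d = coset_action G (coset_space G I K) e"
  have "inv e \<otimes> d \<in> K i" if "i \<in> I" for i
  proof -
    have "coset_action G (coset_space G I K) d (i, \<one> <# K i)
        = coset_action G (coset_space G I K) e (i, \<one> <# K i)"
      using eq by simp
    then have "(i, d <# K i) = (i, e <# K i)"
      using coset_action_apply[OF that one_closed] d e by simp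
    then show ?thesis using lcos_eq_iff[OF subgroups[OF that] d e] by simp
  qed
  then have "inv e \<otimes> d = \<one>" using core by blast
  then show "d = e" using d e by (metis inv_equality inv_inv inv_closed)
qed

end

end

section \<open>A faithful action that is not 2-closed\<close>

text \<open>\<open>\<langle>x, w\<rangle>\<close> is a normal subgroup \<open>C\<^sub>p \<times> C\<^sub>p\<close> of \<open>G\<close> in which \<open>\<langle>w\<rangle>\<close> is normal in \<open>G\<close> and
  \<open>G\<close> acts trivially on \<open>\<langle>x, w\<rangle> / \<langle>w\<rangle>\<close>.\<close>

locale normal_elementary_pair = group G for G (structure) +
  fixes p :: nat and w x :: 'a
  assumes finite_carrier: "finite (carrier G)"
    and prime_p: "Factorial_Ring.prime p"
    and w_closed: "w \<in> carrier G" and w_ne_one: "w \<noteq> \<one>" and w_pow_p: "w [^] p = \<one>"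
    and conj_w: "\<And>d. d \<in> carrier G \<Longrightarrow> d \<otimes> w \<otimes> inv d \<in> powers G w"
    and x_closed: "x \<in> carrier G" and x_pow_p: "x [^] p = \<one>" and x_notin_powers_w: "x \<notin> powers G w"
    and x_w_comm: "x \<otimes> w = w \<otimes> x"
    and conj_x: "\<And>d. d \<in> carrier G \<Longrightarrow> \<exists>b::nat. d \<otimes> x \<otimes> inv d = w [^] b \<otimes> x"
begin

lemma xw_closed: "x \<otimes> w \<in> carrier G"
  using x_closed w_closed by simp

lemma ord_w: "ord w = p"
proof -
  have "ord w dvd p" using pow_eq_id[OF w_closed] w_pow_p by simp
  then show ?thesis using prime_p w_ne_one ord_eq_1[OF w_closed] by (auto simp: prime_nat_iff)
qed

lemma ord_x: "ord x = p"
proof -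
  have "x \<noteq> \<one>" using x_notin_powers_w nat_pow_in_powers[of w 0] by auto
  moreover have "ord x dvd p" using pow_eq_id[OF x_closed] x_pow_p by simp
  ultimately show ?thesis using prime_p ord_eq_1[OF x_closed] by (auto simp: prime_nat_iff)
qed

lemma conj_powers_w: "d \<in> carrier G \<Longrightarrow> u \<in> powers G w \<Longrightarrow> d \<otimes> u \<otimes> inv d \<in> powers G w"
  unfolding powers_def
  using conj_nat_pow[of d w] conj_w w_closed nat_pow_closed_powers by (auto simp: powers_def)

lemma powers_x_inter_powers_w: "y \<in> powers G x \<Longrightarrow> y \<in> powers G w \<Longrightarrow> y = \<one>"
proof (rule ccontr)
  assume y: "y \<in> powers G x" "y \<in> powers G w" "y \<noteq> \<one>"
  then obtain a :: nat where a: "y = x [^] a" unfolding powers_def by blast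
  have "\<not> p dvd a" using y(3) a pow_eq_id[OF x_closed] ord_x by simp
  then have "coprime a p" using prime_p by (metis prime_imp_coprime coprime_commute)
  then have "x \<in> powers G y" using powers_nat_pow_coprime[OF x_closed x_pow_p] a by simp
  then obtain k :: nat where "x = y [^] k" unfolding powers_def by blast
  then have "x \<in> powers G w" using nat_pow_closed_powers[OF w_closed y(2)] by simp
  then show False using x_notin_powers_w by contradiction
qed

lemma powers_x_inter_powers_xw: "y \<in> powers G x \<Longrightarrow> y \<in> powers G (x \<otimes> w) \<Longrightarrow> y = \<one>"
proof -
  assume y: "y \<in> powers G x" "y \<in> powers G (x \<otimes> w)"
  then obtain b :: nat where b: "y = (x \<otimes> w) [^] b" unfolding powers_def by blast
  then have y_eq: "y = x [^] b \<otimes> w [^] b"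
    using pow_mult_distrib[OF x_w_comm x_closed w_closed] by simp
  have "w [^] b = inv (x [^] b) \<otimes> y" using y_eq x_closed w_closed by simp
  also have "\<dots> \<in> powers G x"
    using y(1) subgroup_powers[OF finite_carrier x_closed]
    by (simp add: subgroup.m_closed subgroup.m_inv_closed)
  finally have "w [^] b = \<one>" using powers_x_inter_powers_w by simp
  then have "p dvd b" using pow_eq_id[OF w_closed] ord_w by simp
  then have "x [^] b = \<one>" using pow_eq_id[OF x_closed] ord_x by simp
  then show "y = \<one>" using y_eq \<open>w [^] b = \<one>\<close> by simp
qed

lemma conj_x_or_xw:
  assumes e: "e \<in> carrier G" and y: "y \<in> {x, x \<otimes> w}"
  shows "\<exists>b::nat. e \<otimes> y \<otimes> inv e = w [^] b \<otimes> x"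
proof -
  obtain b :: nat where b: "e \<otimes> x \<otimes> inv e = w [^] b \<otimes> x" using conj_x[OF e] by blast
  obtain c :: nat where c: "e \<otimes> w \<otimes> inv e = w [^] c"
    using conj_w[OF e] unfolding powers_def by blast
  have "e \<otimes> (x \<otimes> w) \<otimes> inv e = (e \<otimes> x \<otimes> inv e) \<otimes> (e \<otimes> w \<otimes> inv e)"
    using e x_closed w_closed by (simp add: m_assoc)
  also have "\<dots> = w [^] b \<otimes> (x \<otimes> w [^] c)" using b c x_closed w_closed by (simp add: m_assoc)
  also have "\<dots> = w [^] (b + c) \<otimes> x"
    using x_closed w_closed group_commutes_pow[OF x_w_comm[symmetric], of c]
    by (simp add: m_assoc nat_pow_mult[symmetric])
  finally show ?thesis using y b by blast
qed

definition block :: "nat \<Rightarrow> 'a set" where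
  "block i = (if i = 0 then powers G w else if i = 1 then powers G x else powers G (x \<otimes> w))"

abbreviation points :: "(nat \<times> 'a set) set" where
  "points \<equiv> coset_space G {0, 1, 2} block"

abbreviation act :: "'a \<Rightarrow> nat \<times> 'a set \<Rightarrow> nat \<times> 'a set" where
  "act \<equiv> coset_action G points"

definition twist :: "nat \<times> 'a set \<Rightarrow> nat \<times> 'a set" where
  "twist = (\<lambda>q\<in>points. if fst q = 0 then act x q else q)"

lemma subgroup_block: "subgroup (block i) G"
  using subgroup_powers[OF finite_carrier] w_closed x_closed xw_closed by (simp add: block_def)

lemma subgroup_block_in: "i \<in> {0, 1, 2} \<Longrightarrow> subgroup (block i) G"
  by (rule subgroup_block)

lemma act_apply:
  "i \<in> {0, 1, 2} \<Longrightarrow> c \<in> carrier G \<Longrightarrow> d \<in> carrier G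
    \<Longrightarrow> act d (i, c <# block i) = (i, (d \<otimes> c) <# block i)"
  by (rule coset_action_apply[OF subgroup_block_in])

lemma fst_act: "q \<in> points \<Longrightarrow> fst (act d q) = fst q"
  by (simp add: coset_action_def)

lemma act_closed: "d \<in> carrier G \<Longrightarrow> q \<in> points \<Longrightarrow> act d q \<in> points"
  by (rule coset_action_closed[OF subgroup_block_in])

lemma act_mult: "d \<in> carrier G \<Longrightarrow> e \<in> carrier G \<Longrightarrow> q \<in> points \<Longrightarrow> act (d \<otimes> e) q = act d (act e q)"
  by (rule coset_action_mult[OF subgroup_block_in])

lemma act_one: "q \<in> points \<Longrightarrow> act \<one> q = q"
  by (rule coset_action_one[OF subgroup_block_in])

lemma act_inv: "d \<in> carrier G \<Longrightarrow> q \<in> points \<Longrightarrow> act (inv d) (act d q) = q"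
  using act_mult[of "inv d" d q] act_one by simp

lemma twist_apply: "q \<in> points \<Longrightarrow> twist q = (if fst q = 0 then act x q else q)"
  by (simp add: twist_def)

lemma twist_Bij: "twist \<in> Bij points"
proof -
  define untwist where "untwist = (\<lambda>q\<in>points. if fst q = 0 then act (inv x) q else q)"
  have "bij_betw twist points points"
  proof (rule bij_betwI[where g = untwist])
    show "twist \<in> points \<rightarrow> points" "untwist \<in> points \<rightarrow> points"
      using act_closed x_closed by (auto simp: twist_def untwist_def)
    show "untwist (twist q) = q" if "q \<in> points" for q
      using that act_inv[OF x_closed] act_closed[OF x_closed] fst_act
      by (simp add: twist_def untwist_def)
    show "twist (untwist q) = q" if "q \<in> points" for q
      using that act_inv[of "inv x"] act_closed[of "inv x"] x_closed fst_act
      by (simp add: twist_def untwist_def)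
  qed
  then show ?thesis unfolding Bij_def twist_def by simp
qed

lemma twist_agrees_on_mixed_pair:
  assumes q1: "q1 \<in> points" "fst q1 = 0" and q2: "q2 \<in> points" "fst q2 \<noteq> 0"
  shows "\<exists>d\<in>carrier G. act d q1 = twist q1 \<and> act d q2 = twist q2"
proof -
  obtain c where c: "c \<in> carrier G" "q1 = (0, c <# block 0)"
    using q1 unfolding mem_coset_space by auto
  obtain j e where je: "j \<in> {1, 2}" "e \<in> carrier G" "q2 = (j, e <# block j)"
    using q2 unfolding mem_coset_space by auto
  define y where "y = (if j = 1 then x else x \<otimes> w)"
  have y: "y \<in> {x, x \<otimes> w}" "y \<in> carrier G" "block j = powers G y"
    using je(1) x_closed xw_closed by (auto simp: y_def block_def)
  obtain b :: nat where b: "e \<otimes> y \<otimes> inv e = w [^] b \<otimes> x" using conj_x_or_xw[OF je(2) y(1)] by blast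
  \<comment> \<open>\<open>d = e y e\<inverse>\<close> fixes the coset \<open>e \<langle>y\<rangle>\<close>, and as an element of \<open>\<langle>w\<rangle> x\<close> it moves
    the cosets of the normal subgroup \<open>\<langle>w\<rangle>\<close> like \<open>x\<close>.\<close>
  define d where "d = w [^] b \<otimes> x"
  have d: "d \<in> carrier G" unfolding d_def using w_closed x_closed by simp
  have "(d \<otimes> e) <# block j = e <# block j"
  proof -
    have "d = (e \<otimes> y) \<otimes> inv e" using b unfolding d_def by simp
    then have "d \<otimes> e = e \<otimes> y" using inv_solve_right[of d "e \<otimes> y" e] d je(2) y(2) by simp
    moreover have "y \<in> block j" using y(2,3) nat_pow_in_powers[of y 1] by simp
    ultimately have "inv e \<otimes> (d \<otimes> e) \<in> block j" using je(2) y(2) by simp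
    then show ?thesis using lcos_eq_iff[OF subgroup_block, of "d \<otimes> e" e j] d je(2) by simp
  qed
  then have "act d q2 = twist q2" using act_apply je d q2 twist_apply by auto
  moreover have "(d \<otimes> c) <# block 0 = (x \<otimes> c) <# block 0"
  proof -
    have "inv (x \<otimes> c) \<otimes> (d \<otimes> c) = inv c \<otimes> w [^] b \<otimes> inv (inv c)"
      using c(1) x_closed w_closed group_commutes_pow[OF x_w_comm[symmetric], of b]
      by (simp add: d_def inv_mult_group m_assoc)
    also have "\<dots> \<in> block 0"
      using conj_powers_w[of "inv c" "w [^] b"] c(1) by (simp add: block_def)
    finally show ?thesis using lcos_eq_iff[OF subgroup_block] c(1) d x_closed by simp
  qed
  then have "act d q1 = twist q1" using act_apply c d q1 twist_apply x_closed by auto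
  ultimately show ?thesis using d by blast
qed

lemma twist_in_two_closure: "twist \<in> two_closure points (act ` carrier G)"
  unfolding two_closure_def
proof (intro CollectI conjI ballI twist_Bij)
  fix q1 q2 assume q: "q1 \<in> points" "q2 \<in> points"
  consider "fst q1 = 0" "fst q2 = 0" | "fst q1 \<noteq> 0" "fst q2 \<noteq> 0"
    | "fst q1 = 0" "fst q2 \<noteq> 0" | "fst q1 \<noteq> 0" "fst q2 = 0" by blast
  then have "\<exists>d\<in>carrier G. twist q1 = act d q1 \<and> twist q2 = act d q2"
  proof cases
    case 1
    then show ?thesis using q twist_apply x_closed by (intro bexI[of _ x]) simp_all
  next
    case 2
    then show ?thesis using q twist_apply act_one by (intro bexI[of _ \<one>]) simp_all
  next
    case 3
    then obtain d where "d \<in> carrier G" "act d q1 = twist q1" "act d q2 = twist q2"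
      using twist_agrees_on_mixed_pair q by blast
    then show ?thesis by (intro bexI[of _ d]) simp_all
  next
    case 4
    then obtain d where "d \<in> carrier G" "act d q2 = twist q2" "act d q1 = twist q1"
      using twist_agrees_on_mixed_pair q by blast
    then show ?thesis by (intro bexI[of _ d]) simp_all
  qed
  then show "\<exists>g\<in>act ` carrier G. twist q1 = g q1 \<and> twist q2 = g q2" by blast
qed

lemma twist_not_in_image: "twist \<notin> act ` carrier G"
proof
  assume "twist \<in> act ` carrier G"
  then obtain h where h: "h \<in> carrier G" "twist = act h" by blast
  have fixes_block: "h \<in> block i" if "i \<in> {1, 2}" for i
  proof -
    have q: "(i, \<one> <# block i) \<in> points" using that by (auto intro: coset_space_memI)
    then have "(i, h <# block i) = (i, \<one> <# block i)"
      using fun_cong[OF h(2), of "(i, \<one> <# block i)"] act_apply[of i \<one> h] twist_apply that h(1)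
      by auto
    then show ?thesis using lcos_eq_iff[OF subgroup_block h(1) one_closed] h(1) by simp
  qed
  have "h = \<one>"
    using powers_x_inter_powers_xw fixes_block[of 1] fixes_block[of 2] by (simp add: block_def)
  then have "(0, x <# block 0) = (0, \<one> <# block 0)"
    using fun_cong[OF h(2), of "(0, \<one> <# block 0)"] act_apply[of 0 \<one>] twist_apply x_closed
      act_one coset_space_memI[of 0 "{0, 1, 2}" \<one> block]
    by simp
  then have "x \<in> block 0" using lcos_eq_iff[OF subgroup_block x_closed one_closed] x_closed by simp
  then show False using x_notin_powers_w by (simp add: block_def)
qed

theorem not_two_closed:
  assumes "infinite (UNIV :: 'u set)"
  shows "\<not> two_closed_group TYPE('u) G"
proof (rule not_two_closed_if_faithful_action[OF is_group assms])
  show "finite points" using finite_carrier by (simp add: finite_coset_space)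
  show "act \<in> hom G (BijGroup points)" by (rule coset_action_hom[OF subgroup_block_in])
  have "(\<Inter>i\<in>{0, 1, 2}. block i) \<subseteq> {\<one>}"
    using powers_x_inter_powers_xw by (auto simp: block_def)
  with subgroup_block_in show "inj_on act (carrier G)" by (rule inj_on_coset_action)
  show "two_closure points (act ` carrier G) \<noteq> act ` carrier G"
    using twist_in_two_closure twist_not_in_image by blast
qed

end

section \<open>Non-cyclic \<open>p\<close>-groups for odd \<open>p\<close>\<close>

context group
begin

text \<open>Class equation: every nontrivial conjugacy class has \<open>p\<close>-power size, so if the centre were
  trivial then \<open>|G| \<equiv> 1 (mod p)\<close>.\<close>

lemma pgroup_ex_central_element:
  assumes fin: "finite (carrier G)" and p: "Factorial_Ring.prime p" and ord: "order G = p ^ Suc k"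
  shows "\<exists>z\<in>carrier G. z \<noteq> \<one> \<and> (\<forall>d\<in>carrier G. d \<otimes> z = z \<otimes> d)"
proof (rule ccontr)
  assume no_centre: "\<not> ?thesis"
  define c where "c = (\<lambda>g. \<lambda>h\<in>carrier G. g \<otimes> h \<otimes> inv g)"
  interpret A: group_action G "carrier G" c unfolding c_def by (rule action_by_conjugation)
  define Os where "Os = orbits G (carrier G) c"
  have orbit_one: "orbit G c \<one> = {\<one>}"
    unfolding orbit_def c_def by (auto intro!: exI[of _ \<one>])
  have fin_Os: "finite Os" unfolding Os_def orbits_def using fin by simp
  have one_Os: "{\<one>} \<in> Os" unfolding Os_def orbits_def using orbit_one by force
  have p_dvd: "p dvd card C" if C: "C \<in> Os" "C \<noteq> {\<one>}" for C
  proof -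
    obtain y where y: "y \<in> carrier G" "C = orbit G c y" using C unfolding Os_def orbits_def by blast
    have "card C dvd p ^ Suc k"
      using A.orbit_stabilizer_theorem[OF y(1)] y(2) ord by (metis dvd_triv_left)
    then obtain i where i: "i \<le> Suc k" "card C = p ^ i" using divides_primepow_nat[OF p] by blast
    have "card C \<noteq> 1"
    proof
      assume "card C = 1"
      moreover have "y \<in> C" unfolding y(2) using A.orbit_refl[OF y(1)] .
      ultimately have O_y: "C = {y}" by (metis card_1_singletonE singletonD)
      then have "y \<noteq> \<one>" using C(2) by simp
      then obtain d where d: "d \<in> carrier G" "d \<otimes> y \<noteq> y \<otimes> d" using no_centre y(1) by blast
      have "c d y \<in> C" unfolding y(2) orbit_def using d(1) by blast
      then have "d \<otimes> y \<otimes> inv d = y" using O_y y(1) by (simp add: c_def)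
      then show False using d y(1) by (metis inv_solve_right m_closed)
    qed
    then show ?thesis using i by (cases i) auto
  qed
  have "(\<Sum>C\<in>Os. card C) = (\<Sum>C\<in>Os. \<Sum>y\<in>C. (1::nat))" by simp
  also have "\<dots> = (\<Sum>y\<in>carrier G. 1)" using A.disjoint_sum[OF fin] unfolding Os_def by blast
  finally have "order G = (\<Sum>C\<in>Os. card C)" by (simp add: order_def)
  also have "\<dots> = 1 + (\<Sum>C\<in>Os - {{\<one>}}. card C)"
    using sum.remove[OF fin_Os one_Os, of card] by simp
  finally have "order G = 1 + (\<Sum>C\<in>Os - {{\<one>}}. card C)" .
  moreover have "p dvd (\<Sum>C\<in>Os - {{\<one>}}. card C)" by (rule dvd_sum) (use p_dvd in auto)
  moreover have "p dvd order G" using ord by simp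
  ultimately have "p dvd 1" by (metis dvd_add_left_iff)
  then show False using p by simp
qed

lemma rcos_nat_pow_FactGroup:
  assumes "M \<lhd> G" and "g \<in> carrier G"
  shows "(M #> g) [^]\<^bsub>G Mod M\<^esub> (k::nat) = M #> (g [^] k)"
proof (induction k)
  case 0 then show ?case using assms(1) by (simp add: normal_def subgroup.subset)
next
  case (Suc k)
  then show ?case using normal.rcos_sum[OF assms(1), of "g [^] k" g] assms(2) by simp
qed

lemma pgroup_ex_central_order_p:
  assumes fin: "finite (carrier G)" and p: "Factorial_Ring.prime p" and ord: "order G = p ^ Suc k"
  shows "\<exists>q\<in>carrier G. q \<noteq> \<one> \<and> q [^] p = \<one> \<and> (\<forall>d\<in>carrier G. d \<otimes> q = q \<otimes> d)"
proof -
  obtain z where z: "z \<in> carrier G" "z \<noteq> \<one>" and z_central: "\<forall>d\<in>carrier G. d \<otimes> z = z \<otimes> d"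
    using pgroup_ex_central_element[OF fin p ord] by blast
  have "ord z dvd p ^ Suc k" using ord_dvd_group_order[OF z(1)] ord by simp
  then obtain t where t: "ord z = p ^ Suc t"
    using divides_primepow_nat[OF p] z ord_eq_1 by (metis not0_implies_Suc power_0)
  define q where "q = z [^] (p ^ t)"
  have q: "q \<in> carrier G" "ord q = p"
    unfolding q_def using z(1) ord_pow[OF z(1), of "p ^ t"] t prime_gt_0_nat[OF p] by auto
  then have "q \<noteq> \<one>" using prime_gt_1_nat[OF p] by auto
  moreover have "q [^] p = \<one>" using pow_ord_eq_1[OF q(1)] q(2) by simp
  moreover have "d \<otimes> q = q \<otimes> d" if "d \<in> carrier G" for d
    unfolding q_def
    using group_commutes_pow[OF z_central[rule_format, OF that, symmetric] z(1) that] by simp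
  ultimately show ?thesis using q(1) by blast
qed

lemma ex_central_order_p_mod_normal:
  assumes fin: "finite (carrier G)" and p: "Factorial_Ring.prime p" and ord: "order G = p ^ n"
    and M: "M \<lhd> G" and proper: "M \<noteq> carrier G"
  shows "\<exists>g\<in>carrier G. g \<notin> M \<and> g [^] p \<in> M \<and> (\<forall>d\<in>carrier G. \<exists>\<mu>\<in>M. d \<otimes> g \<otimes> inv d = \<mu> \<otimes> g)"
proof -
  interpret Q: group "G Mod M" using normal.factorgroup_is_group[OF M] .
  have subM: "subgroup M G" using M by (simp add: normal_def)
  have MG: "M \<subseteq> carrier G" using subM subgroup.subset by blast
  have carrier_Q: "carrier (G Mod M) = rcosets M" by (simp add: FactGroup_def)
  have fin_Q: "finite (carrier (G Mod M))" using carrier_Q fin unfolding RCOSETS_def by simp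
  have lagrange_M: "card (rcosets M) * card M = p ^ n" using lagrange[OF subM] ord by simp
  then obtain i where i: "card (rcosets M) = p ^ i" using divides_primepow_nat[OF p]
    by (metis dvd_triv_left)
  have "card M < order G" using proper MG fin by (simp add: order_def psubset_card_mono psubsetI)
  then have "i \<noteq> 0" using lagrange_M i ord by (metis less_irrefl mult_1 power_0)
  then obtain k where k: "order (G Mod M) = p ^ Suc k" using i carrier_Q
    by (metis not0_implies_Suc order_def)
  obtain q where q: "q \<in> carrier (G Mod M)" "q \<noteq> \<one>\<^bsub>G Mod M\<^esub>" "q [^]\<^bsub>G Mod M\<^esub> p = \<one>\<^bsub>G Mod M\<^esub>"
    and q_central: "\<forall>d\<in>carrier (G Mod M). d \<otimes>\<^bsub>G Mod M\<^esub> q = q \<otimes>\<^bsub>G Mod M\<^esub> d"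
    using Q.pgroup_ex_central_order_p[OF fin_Q p k] by blast
  obtain g where g: "g \<in> carrier G" "q = M #> g" using q(1) carrier_Q unfolding RCOSETS_def by blast
  have "g \<notin> M" using q(2) g(2) subgroup.rcos_const[OF subM] by (auto simp: FactGroup_def)
  moreover have "g [^] p \<in> M"
    using q(3) rcos_nat_pow_FactGroup[OF M g(1), of p] g(2) rcos_self[OF _ subM, of "g [^] p"] g(1)
    by (simp add: FactGroup_def)
  moreover have "\<exists>\<mu>\<in>M. d \<otimes> g \<otimes> inv d = \<mu> \<otimes> g" if d: "d \<in> carrier G" for d
  proof -
    have "M #> d \<in> carrier (G Mod M)" using carrier_Q d MG by (simp add: rcosetsI)
    then have "(M #> d) <#> (M #> g) = (M #> g) <#> (M #> d)"
      using q_central g(2) by (simp add: FactGroup_def)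
    then have "M #> (d \<otimes> g) = M #> (g \<otimes> d)" using normal.rcos_sum[OF M] d g(1) by simp
    then have "d \<otimes> g \<in> M #> (g \<otimes> d)" using rcos_self[OF _ subM, of "d \<otimes> g"] d g(1) by simp
    then obtain \<mu> where "\<mu> \<in> M" "d \<otimes> g = \<mu> \<otimes> (g \<otimes> d)" unfolding r_coset_def by blast
    moreover have "\<mu> \<in> carrier G" using \<open>\<mu> \<in> M\<close> MG by blast
    ultimately show ?thesis using d g(1) by (metis inv_solve_right m_assoc m_closed)
  qed
  ultimately show ?thesis using g(1) by blast
qed

text \<open>Since \<open>h\<^sup>p\<close> centralises \<open>m\<close>, \<open>r\<^sup>p \<equiv> 1\<close> modulo \<open>ord m\<close>, hence modulo \<open>p\<close>, and Fermat
  gives \<open>r \<equiv> 1 (mod p)\<close>.\<close>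

lemma conj_exponent_mod_prime:
  assumes p: "Factorial_Ring.prime p" and h: "h \<in> carrier G" and m: "m \<in> carrier G"
    and r: "h \<otimes> m \<otimes> inv h = m [^] (r::nat)" and ord_m: "ord m = p ^ Suc e"
    and h_pow: "h [^] p \<in> powers G m"
  shows "r mod p = 1"
proof -
  obtain s :: nat where s: "h [^] p = m [^] s" using h_pow unfolding powers_def by blast
  have "m [^] s \<otimes> m = m \<otimes> m [^] s" using m by (metis nat_pow_Suc nat_pow_Suc2)
  then have "h [^] p \<otimes> m [^] (1::nat) \<otimes> inv (h [^] p) = m" using s m by (simp add: m_assoc)
  then have "m [^] (r ^ p) = m" using conj_nat_pow_iter[OF h m r, of p 1] by simp
  then have "m [^] int (r ^ p) = m [^] int 1" unfolding int_pow_int using m by simp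
  then have "int (p ^ Suc e) dvd int 1 - int (r ^ p)" using int_pow_eq[OF m] ord_m by simp
  then have "int p dvd int (r ^ p) - int 1"
    by (metis dvd_diff_commute dvd_mult_left of_nat_mult power_Suc)
  then have "r ^ p mod p = 1 mod p" by (metis mod_eq_dvd_iff of_nat_eq_iff of_nat_mod)
  then show ?thesis using fermat_little_nat[OF p, of r] prime_gt_1_nat[OF p] by simp
qed

text \<open>For odd \<open>p\<close> the coset \<open>\<langle>m\<rangle> h\<close> contains an element of order dividing \<open>p\<close>: with
  \<open>\<Sum>i<p. r\<^sup>i = p u\<close> and \<open>u\<close> prime to \<open>p\<close>, \<open>(m\<^sup>j h)\<^sup>p = m\<^sup>j\<^sup>p\<^sup>u h\<^sup>p\<close>, and \<open>j\<close> can be chosen so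
  that \<open>m\<^sup>j\<^sup>p\<^sup>u\<close> cancels \<open>h\<^sup>p = m\<^sup>p\<^sup>s\<close>.\<close>

lemma ex_root_of_unity_in_coset:
  assumes p: "Factorial_Ring.prime p" "odd p" and h: "h \<in> carrier G" and m: "m \<in> carrier G"
    and r: "h \<otimes> m \<otimes> inv h = m [^] (r::nat)" "r mod p = 1"
    and m_pow: "m [^] (p ^ Suc e) = \<one>" and h_pow: "h [^] p = m [^] (p * s)"
  shows "\<exists>j::nat. (m [^] j \<otimes> h) [^] p = \<one>"
proof -
  obtain u where u: "(\<Sum>i<p. r ^ i) = p * u" "coprime u p"
    using geometric_sum_mod_prime[OF p r(2)] by blast
  define y where "y = m [^] p"
  have y: "y \<in> carrier G" "y [^] (p ^ e) = \<one>" unfolding y_def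
    using m m_pow by (simp_all add: nat_pow_pow)
  have "coprime u (p ^ e)" using u(2) by simp
  then have "y \<in> powers G (y [^] u)" by (rule powers_nat_pow_coprime[OF y])
  then obtain u' :: nat where "y = (y [^] u) [^] u'" unfolding powers_def by blast
  then have u': "(y [^] u) [^] u' = y" by simp
  define k where "k = (p ^ e - 1) * s"
  have "(m [^] (u' * k) \<otimes> h) [^] p = m [^] (u' * k * (p * u)) \<otimes> m [^] (p * s)"
    using nat_pow_mult_conj[OF h m r(1)] u(1) h_pow by simp
  also have "m [^] (u' * k * (p * u)) = ((y [^] u) [^] u') [^] k"
    unfolding y_def using m by (simp add: nat_pow_pow ac_simps)
  also have "\<dots> = m [^] (p * k)" using u' m unfolding y_def by (simp add: nat_pow_pow)
  also have "m [^] (p * k) \<otimes> m [^] (p * s) = (m [^] (p ^ Suc e)) [^] s"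
    using m prime_gt_0_nat[OF p(1)] unfolding k_def
    by (simp add: nat_pow_mult nat_pow_pow algebra_simps diff_mult_distrib2)
  finally show ?thesis using m_pow by auto
qed

lemma normal_powersI:
  assumes fin: "finite (carrier G)" and m: "m \<in> carrier G"
    and conj_m: "\<And>d. d \<in> carrier G \<Longrightarrow> d \<otimes> m \<otimes> inv d \<in> powers G m"
  shows "powers G m \<lhd> G"
  unfolding normal_inv_iff
proof (intro conjI ballI subgroup_powers[OF fin m])
  fix d u assume d: "d \<in> carrier G" and "u \<in> powers G m"
  then obtain k :: nat where "u = m [^] k" unfolding powers_def by blast
  then show "d \<otimes> u \<otimes> inv d \<in> powers G m"
    using conj_nat_pow[OF d m] nat_pow_closed_powers[OF m conj_m[OF d]] by simp
qed

lemma cyclic_group_if_powers_eq_carrier: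
  assumes m: "m \<in> carrier G" and eq: "powers G m = carrier G"
  shows "cyclic_group G"
proof -
  have "carrier G = range (\<lambda>k::int. m [^] k)"
  proof
    show "carrier G \<subseteq> range (\<lambda>k::int. m [^] k)"
      using eq unfolding powers_def by (auto simp flip: int_pow_int)
  qed (use m in auto)
  then show ?thesis using cyclic_group m by blast
qed

text \<open>If \<open>m\<close> were a power of \<open>g\<close>, then \<open>\<langle>g\<rangle>\<close> would be a
  larger normal cyclic subgroup.\<close>

lemma not_in_powers_of_central_lift:
  assumes fin: "finite (carrier G)" and m: "m \<in> carrier G"
    and max: "\<And>m'. m' \<in> carrier G \<Longrightarrow> (\<forall>d\<in>carrier G. d \<otimes> m' \<otimes> inv d \<in> powers G m') \<Longrightarrow> ord m' \<le> ord m"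
    and g: "g \<in> carrier G" "g \<notin> powers G m"
    and g_central: "\<And>d. d \<in> carrier G \<Longrightarrow> \<exists>\<mu>\<in>powers G m. d \<otimes> g \<otimes> inv d = \<mu> \<otimes> g"
  shows "m \<notin> powers G g"
proof
  assume "m \<in> powers G g"
  then have sub: "powers G m \<subseteq> powers G g"
    using nat_pow_closed_powers[OF g(1)] unfolding powers_def by blast
  have "d \<otimes> g \<otimes> inv d \<in> powers G g" if d: "d \<in> carrier G" for d
  proof -
    obtain \<mu> where "\<mu> \<in> powers G m" "d \<otimes> g \<otimes> inv d = \<mu> \<otimes> g" using g_central[OF d] by blast
    then show ?thesis
      using sub subgroup.m_closed[OF subgroup_powers[OF fin g(1)]] nat_pow_in_powers[of g 1] g(1)
      by auto
  qed
  then have "ord g \<le> ord m" using max g(1) by blast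
  moreover have "powers G m \<subset> powers G g" using sub g nat_pow_in_powers[of g 1] by auto
  then have "card (powers G m) < card (powers G g)"
    using psubset_card_mono finite_subset[OF powers_subset_carrier[OF g(1)] fin] by blast
  ultimately show False using card_powers[OF fin] m g(1) by simp
qed

lemma coset_root_of_unity_exponent_dvd:
  assumes p: "Factorial_Ring.prime p" "odd p" and m: "m \<in> carrier G" and ord_m: "ord m = p ^ Suc e"
    and x: "x \<in> carrier G" "x [^] p = \<one>" and r: "x \<otimes> m \<otimes> inv x = m [^] (r::nat)" "r mod p = 1"
    and c: "(m [^] (c::nat) \<otimes> x) [^] p = \<one>"
  shows "p ^ e dvd c"
proof -
  obtain u where u: "(\<Sum>i<p. r ^ i) = p * u" "coprime u p"
    using geometric_sum_mod_prime[OF p r(2)] by blast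
  have "m [^] (c * (p * u)) = \<one>"
    using c nat_pow_mult_conj[OF x(1) m r(1), of c p] u(1) x(2) m by simp
  then have "p * p ^ e dvd p * (c * u)" using pow_eq_id[OF m] ord_m by (simp add: ac_simps)
  then have "p ^ e dvd c * u" using prime_gt_0_nat[OF p(1)] by simp
  then show ?thesis using u(2) by (simp add: coprime_dvd_mult_left_iff coprime_commute)
qed

lemma normal_elementary_pair_of_normal_cyclic:
  assumes fin: "finite (carrier G)" and p: "Factorial_Ring.prime p" "odd p"
    and m: "m \<in> carrier G" and ord_m: "ord m = p ^ Suc e"
    and conj_m: "\<And>d. d \<in> carrier G \<Longrightarrow> d \<otimes> m \<otimes> inv d \<in> powers G m"
    and x: "x \<in> carrier G" "x \<notin> powers G m" "x [^] p = \<one>"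
    and r: "x \<otimes> m \<otimes> inv x = m [^] (r::nat)" "r mod p = 1"
    and conj_x: "\<And>d. d \<in> carrier G \<Longrightarrow> \<exists>c::nat. d \<otimes> x \<otimes> inv d = m [^] c \<otimes> x"
  shows "normal_elementary_pair G p (m [^] (p ^ e)) x"
proof -
  define w where "w = m [^] (p ^ e)"
  have w: "w \<in> carrier G" unfolding w_def using m by simp
  have p1: "1 < p" using prime_gt_1_nat[OF p(1)] .
  have w_pow: "w [^] (k::nat) = m [^] (p ^ e * k)" for k
    unfolding w_def using m by (simp add: nat_pow_pow)
  have w_p: "w [^] p = \<one>" using w_pow[of p] pow_eq_id[OF m] ord_m by (simp add: mult.commute)
  have powers_w: "powers G w \<subseteq> powers G m" using w_pow unfolding powers_def by auto
  have "\<not> p ^ Suc e dvd p ^ e" using p1 by (intro nat_dvd_not_less) simp_all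
  then have "w \<noteq> \<one>" unfolding w_def using pow_eq_id[OF m] ord_m by simp
  moreover have "d \<otimes> w \<otimes> inv d \<in> powers G w" if d: "d \<in> carrier G" for d
  proof -
    obtain a :: nat where "d \<otimes> m \<otimes> inv d = m [^] a" using conj_m[OF d] unfolding powers_def by blast
    then have "d \<otimes> w \<otimes> inv d = w [^] a"
      using conj_nat_pow[OF d m, of "p ^ e"] w_pow m by (simp add: w_def nat_pow_pow mult.commute)
    then show ?thesis by simp
  qed
  moreover have "x \<otimes> w = w \<otimes> x"
  proof -
    have "r = 1 + p * (r div p)" using r(2) by (metis add.commute div_mult_mod_eq mult.commute)
    then have "w [^] r = w"
      using w w_p by (metis nat_pow_eone nat_pow_mult nat_pow_one nat_pow_pow r_one)
    moreover have "x \<otimes> w \<otimes> inv x = w [^] r"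
      using conj_nat_pow[OF x(1) m, of "p ^ e"] r(1) w_pow m
      by (simp add: w_def nat_pow_pow mult.commute)
    ultimately show ?thesis using x(1) w by (metis inv_solve_right m_closed)
  qed
  moreover have "\<exists>b::nat. d \<otimes> x \<otimes> inv d = w [^] b \<otimes> x" if d: "d \<in> carrier G" for d
  proof -
    obtain c :: nat where c: "d \<otimes> x \<otimes> inv d = m [^] c \<otimes> x" using conj_x[OF d] by blast
    have "(m [^] c \<otimes> x) [^] p = \<one>" using conj_nat_pow[OF d x(1), of p] x(3) d c by simp
    then have "p ^ e dvd c" using coset_root_of_unity_exponent_dvd[OF p m ord_m x(1,3) r] by blast
    then obtain b where "c = p ^ e * b" by blast
    then have "d \<otimes> x \<otimes> inv d = w [^] b \<otimes> x" using c w_pow by simp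
    then show ?thesis by blast
  qed
  ultimately show ?thesis
    using fin p(1) w w_p x powers_w unfolding w_def[symmetric]
    by unfold_locales auto
qed

lemma prime_dvd_exponent_if_not_in_powers:
  assumes p: "Factorial_Ring.prime p" and m: "m \<in> carrier G" and ord_m: "ord m = p ^ Suc e"
    and g: "g \<in> carrier G" "m \<notin> powers G g" and s: "g [^] p = m [^] (s::nat)"
  shows "p dvd s"
proof (rule ccontr)
  assume "\<not> p dvd s"
  then have "coprime s (p ^ Suc e)" using p by (simp add: prime_imp_coprime coprime_commute)
  then have "m \<in> powers G (g [^] p)"
    using powers_nat_pow_coprime[OF m] pow_ord_eq_1[OF m] ord_m s by simp
  then show False using g nat_pow_closed_powers[OF g(1)] unfolding powers_def by auto
qed

lemma conj_in_powers_coset: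
  assumes fin: "finite (carrier G)" and m: "m \<in> carrier G" and d: "d \<in> carrier G"
    and conj_m: "d \<otimes> m \<otimes> inv d \<in> powers G m"
    and g: "g \<in> carrier G" and g_conj: "d \<otimes> g \<otimes> inv d = \<mu> \<otimes> g" "\<mu> \<in> powers G m"
  shows "\<exists>c::nat. d \<otimes> (m [^] (j::nat) \<otimes> g) \<otimes> inv d = m [^] c \<otimes> (m [^] j \<otimes> g)"
proof -
  have M: "subgroup (powers G m) G" using subgroup_powers[OF fin m] .
  have \<mu>: "\<mu> \<in> carrier G" using g_conj(2) powers_subset_carrier[OF m] by blast
  have "d \<otimes> m [^] j \<otimes> inv d \<in> powers G m"
    using conj_nat_pow[OF d m] nat_pow_closed_powers[OF m conj_m] by simp
  then have "(d \<otimes> m [^] j \<otimes> inv d) \<otimes> \<mu> \<otimes> inv (m [^] j) \<in> powers G m"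
    using g_conj(2) M by (simp add: subgroup.m_closed subgroup.m_inv_closed)
  then obtain c :: nat where c: "(d \<otimes> m [^] j \<otimes> inv d) \<otimes> \<mu> \<otimes> inv (m [^] j) = m [^] c"
    unfolding powers_def by blast
  have "d \<otimes> (m [^] j \<otimes> g) \<otimes> inv d = (d \<otimes> m [^] j \<otimes> inv d) \<otimes> (d \<otimes> g \<otimes> inv d)"
    using d m g by (simp add: m_assoc)
  also have "\<dots> = m [^] c \<otimes> (m [^] j \<otimes> g)"
    unfolding g_conj(1) c[symmetric] using d m g \<mu> by (simp add: m_assoc)
  finally show ?thesis by blast
qed

lemma normal_elementary_pair_of_central_lift:
  assumes fin: "finite (carrier G)" and p: "Factorial_Ring.prime p" "odd p"
    and m: "m \<in> carrier G" and ord_m: "ord m = p ^ Suc e"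
    and conj_m: "\<And>d. d \<in> carrier G \<Longrightarrow> d \<otimes> m \<otimes> inv d \<in> powers G m"
    and g: "g \<in> carrier G" "g \<notin> powers G m" "g [^] p \<in> powers G m" "m \<notin> powers G g"
    and g_central: "\<And>d. d \<in> carrier G \<Longrightarrow> \<exists>\<mu>\<in>powers G m. d \<otimes> g \<otimes> inv d = \<mu> \<otimes> g"
  shows "\<exists>x. normal_elementary_pair G p (m [^] (p ^ e)) x"
proof -
  have M: "subgroup (powers G m) G" using subgroup_powers[OF fin m] .
  obtain s :: nat where s: "g [^] p = m [^] s" using g(3) unfolding powers_def by blast
  then have "p dvd s" using prime_dvd_exponent_if_not_in_powers[OF p(1) m ord_m g(1,4)] by blast
  then obtain s' where s': "g [^] p = m [^] (p * s')" using s by blast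
  obtain r :: nat where r: "g \<otimes> m \<otimes> inv g = m [^] r"
    using conj_m[OF g(1)] unfolding powers_def by blast
  have r_mod: "r mod p = 1" using conj_exponent_mod_prime[OF p(1) g(1) m r ord_m g(3)] .
  obtain j :: nat where x_pow: "(m [^] j \<otimes> g) [^] p = \<one>"
    using ex_root_of_unity_in_coset[OF p g(1) m r r_mod _ s'] pow_ord_eq_1[OF m] ord_m by auto
  define x where "x = m [^] j \<otimes> g"
  have x: "x \<in> carrier G" unfolding x_def using m g(1) by simp
  have x_pow_p: "x [^] p = \<one>" using x_pow unfolding x_def .
  have x_notin: "x \<notin> powers G m"
  proof
    assume "x \<in> powers G m"
    then have "inv (m [^] j) \<otimes> x \<in> powers G m"
      using M by (simp add: subgroup.m_closed subgroup.m_inv_closed)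
    then show False using g(1,2) m unfolding x_def by simp
  qed
  have x_conj_m: "x \<otimes> m \<otimes> inv x = m [^] r"
  proof -
    have "x \<otimes> m \<otimes> inv x = m [^] j \<otimes> (g \<otimes> m \<otimes> inv g) \<otimes> inv (m [^] j)"
      unfolding x_def using m g(1) by (simp add: m_assoc inv_mult_group)
    also have "\<dots> = (m [^] j \<otimes> m [^] r) \<otimes> inv (m [^] j)" using r by simp
    also have "m [^] j \<otimes> m [^] r = m [^] r \<otimes> m [^] j"
      using m by (simp add: nat_pow_mult add.commute)
    finally show ?thesis using m by (simp add: m_assoc)
  qed
  have conj_x: "\<exists>c::nat. d \<otimes> x \<otimes> inv d = m [^] c \<otimes> x" if d: "d \<in> carrier G" for d
    using g_central[OF d] conj_in_powers_coset[OF fin m d conj_m[OF d] g(1)] unfolding x_def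
    by blast
  have "normal_elementary_pair G p (m [^] (p ^ e)) x"
    using normal_elementary_pair_of_normal_cyclic
        [OF fin p m ord_m conj_m x x_notin x_pow_p x_conj_m r_mod]
      conj_x by blast
  then show ?thesis by blast
qed

lemma noncyclic_pgroup_ex_normal_elementary_pair:
  assumes fin: "finite (carrier G)" and p: "Factorial_Ring.prime p" "odd p"
    and ord: "order G = p ^ n" and not_cyclic: "\<not> cyclic_group G"
  shows "\<exists>w x. normal_elementary_pair G p w x"
proof -
  define NC where "NC = {m \<in> carrier G. \<forall>d\<in>carrier G. d \<otimes> m \<otimes> inv d \<in> powers G m}"
  have "\<one> \<in> NC" unfolding NC_def using nat_pow_in_powers[of \<one> 0] by simp
  moreover have "finite NC" unfolding NC_def using fin by simp
  ultimately have "Max (ord ` NC) \<in> ord ` NC" by (intro Max_in) auto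
  then obtain m where "m \<in> NC" and m_max: "ord m = Max (ord ` NC)" by auto
  have max: "ord m' \<le> ord m" if "m' \<in> NC" for m'
    unfolding m_max using \<open>finite NC\<close> that by simp
  from \<open>m \<in> NC\<close> have m: "m \<in> carrier G" and conj_m: "\<And>d. d \<in> carrier G \<Longrightarrow> d \<otimes> m \<otimes> inv d \<in> powers G m"
    unfolding NC_def by auto
  have "powers G m \<noteq> carrier G" using cyclic_group_if_powers_eq_carrier[OF m] not_cyclic by blast
  then obtain g where g: "g \<in> carrier G" "g \<notin> powers G m" "g [^] p \<in> powers G m"
    and g_central: "\<forall>d\<in>carrier G. \<exists>\<mu>\<in>powers G m. d \<otimes> g \<otimes> inv d = \<mu> \<otimes> g"
    using ex_central_order_p_mod_normal[OF fin p(1) ord normal_powersI[OF fin m conj_m]] by blast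
  have m_g: "m \<notin> powers G g"
    using not_in_powers_of_central_lift[OF fin m _ g(1,2)] max g_central unfolding NC_def by blast
  have "ord m dvd p ^ n" using ord_dvd_group_order[OF m] ord by simp
  moreover have "ord m \<noteq> 1" using m_g ord_eq_1[OF m] nat_pow_in_powers[of g 0] by auto
  ultimately obtain e where "ord m = p ^ Suc e"
    using divides_primepow_nat[OF p(1)] by (metis not0_implies_Suc power_0)
  then show ?thesis
    using normal_elementary_pair_of_central_lift[OF fin p m _ conj_m g m_g] g_central by blast
qed

end

theorem mainTheorem12:
  fixes G :: "('a, 'c) monoid_scheme" and p :: nat
  assumes "Factorial_Ring.prime p" and "odd p"
    and "group G" and "finite (carrier G)" and "\<exists>n. order G = p ^ n"
    and "infinite (UNIV :: 'b set)"
  shows "two_closed_group TYPE('b) G \<longleftrightarrow> cyclic_group G"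
proof
  obtain n where ord: "order G = p ^ n" using assms(5) by blast
  show "cyclic_group G" if "two_closed_group TYPE('b) G"
  proof (rule ccontr)
    assume "\<not> cyclic_group G"
    then obtain w x where "normal_elementary_pair G p w x"
      using group.noncyclic_pgroup_ex_normal_elementary_pair[OF assms(3,4,1,2) ord] by blast
    from normal_elementary_pair.not_two_closed[OF this assms(6)] that show False by contradiction
  qed
  show "two_closed_group TYPE('b) G" if "cyclic_group G"
    using cyclic_pgroup_two_closed[OF assms(1,3) ord that] .
qed

end
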